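(* Let $p$ be a prime, $A=\{0,1,\dots,p-1\}$ viewed as $\mathbb Z_p$, $n\ge3$, and let $\rho\subseteq A^n$ have full pattern and satisfy $$\{(x_1,\dots,x_n)\in A^n:\ x_1+\dots+x_n\equiv0\pmod p\}\subsetneq\rho.$$ Then $\rho=A^n$.
   Context: The pattern of $\rho\subseteq A^n$: for $i\ne j$, $i\overset{\rho}{\sim}j$ iff there do NOT exist $a_1,\dots,a_n,b_i,b_j\in A$ with $(a_1,\dots,a_n)\notin\rho$ while the tuples obtained by replacing $a_i$ by $b_i$, replacing $a_j$ by $b_j$, and replacing both, all lie in $\rho$. The pattern is full if $i\overset{\rho}{\sim}j$ for all $i,j\in\{1,\dots,n\}$. *)

theory Defs
  imports Main "HOL-Computational_Algebra.Primes"
begin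

text \<open>Tuples in A^n are represented as lists of length n; indices are 0-based (0..n-1).\<close>

definition tuples :: "'a set \<Rightarrow> nat \<Rightarrow> 'a list set" where
  "tuples A n = {xs. length xs = n \<and> set xs \<subseteq> A}"

definition pattern_rel :: "'a set \<Rightarrow> nat \<Rightarrow> 'a list set \<Rightarrow> nat \<Rightarrow> nat \<Rightarrow> bool" where
  "pattern_rel A n rho i j \<longleftrightarrow>
     \<not> (\<exists>a \<in> tuples A n. \<exists>bi \<in> A. \<exists>bj \<in> A.
          a \<notin> rho \<and> a[i := bi] \<in> rho \<and> a[j := bj] \<in> rho \<and> a[i := bi, j := bj] \<in> rho)"

definition full_pattern :: "'a set \<Rightarrow> nat \<Rightarrow> 'a list set \<Rightarrow> bool" where
  "full_pattern A n rho \<longleftrightarrow> (\<forall>i<n. \<forall>j<n. i \<noteq> j \<longrightarrow> pattern_rel A n rho i j)"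

end

theory Submission
  imports Defs "HOL-Number_Theory.Cong"
begin

text \<open>
  Call an update that adds d at position i and e at position k, with d + e = 0 mod p, a transfer;
  it preserves the coordinate sum mod p. Full pattern says: if three corners of a "square"
  a, a[i:=b], a[j:=b'], a[i:=b, j:=b'] lie in rho, so does the fourth. Applying this to squares
  whose other corners have sum 0, rho is closed under transfers of the amount -s, s (s the sum of
  the tuple), and, iterating and using that s is invertible mod p when s is nonzero, under all
  transfers; for this a third coordinate is needed, whence n \<ge> 3. Transfers connect all tuples
  of equal sum, so rho is a union of sum classes. A square with corners of sums s, t and 0 shows
  that the set of sums occurring in rho is closed under addition; it contains a nonzero residue,
  hence everything since p is prime.
\<close>

definition shift_at :: "nat \<Rightarrow> nat list \<Rightarrow> nat \<Rightarrow> nat \<Rightarrow> nat list" where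
  "shift_at p x i d = x[i := (x ! i + d) mod p]"

lemma length_shift_at [simp]: "length (shift_at p x i d) = length x"
  by (simp add: shift_at_def)

lemma nth_shift_at:
  "j < length x \<Longrightarrow> shift_at p x i d ! j = (if j = i then (x ! i + d) mod p else x ! j)"
  by (simp add: shift_at_def nth_list_update)

lemma shift_at_in_tuples:
  "0 < p \<Longrightarrow> x \<in> tuples {0..<p} n \<Longrightarrow> shift_at p x i d \<in> tuples {0..<p} n"
  unfolding shift_at_def tuples_def using set_update_subset_insert by fastforce

lemma sum_list_shift_at:
  assumes "i < length x"
  shows "[sum_list (shift_at p x i d) = sum_list x + d] (mod p)"
proof -
  have "sum_list (shift_at p x i d) + x ! i = sum_list x + (x ! i + d) mod p"
    using assms elem_le_sum_list[OF assms] by (simp add: shift_at_def sum_list_update)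
  then have "[sum_list (shift_at p x i d) + x ! i = sum_list x + d + x ! i] (mod p)"
    by (metis cong_def mod_add_right_eq add.assoc add.commute)
  then show ?thesis
    by (simp add: cong_add_rcancel_nat)
qed

lemma sum_list_shift_at_pair:
  assumes "i < length x" "k < length x"
  shows "[sum_list (shift_at p (shift_at p x i d) k e) = sum_list x + d + e] (mod p)"
proof -
  have "[sum_list (shift_at p (shift_at p x i d) k e) = sum_list (shift_at p x i d) + e] (mod p)"
    using assms by (simp add: sum_list_shift_at)
  also have "[sum_list (shift_at p x i d) + e = sum_list x + d + e] (mod p)"
    using assms by (simp add: sum_list_shift_at cong_add_rcancel_nat)
  finally show ?thesis .
qed

lemma shift_at_cong: "[d = d'] (mod p) \<Longrightarrow> shift_at p x i d = shift_at p x i d'"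
  unfolding shift_at_def cong_def by (metis mod_add_right_eq)

lemma shift_at_shift_at: "shift_at p (shift_at p x i d) i e = shift_at p x i (d + e)"
  by (cases "i < length x") (simp_all add: shift_at_def mod_add_left_eq add.assoc list_update_beyond)

lemma shift_at_zero: "x ! i < p \<Longrightarrow> [d = 0] (mod p) \<Longrightarrow> shift_at p x i d = x"
  unfolding shift_at_def cong_def by (metis add.right_neutral list_update_id mod_add_right_eq mod_less)

lemma shift_at_commute:
  "i \<noteq> k \<Longrightarrow> shift_at p (shift_at p x i d) k e = shift_at p (shift_at p x k e) i d"
  by (simp add: shift_at_def list_update_swap)

lemma shift_at_pair_add:
  assumes "i \<noteq> k"
  shows "shift_at p (shift_at p (shift_at p (shift_at p x i a) k b) i c) k d
       = shift_at p (shift_at p x i (a + c)) k (b + d)"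
  using assms by (metis shift_at_commute shift_at_shift_at)

lemma cong_add_complement:
  fixes a p :: nat
  assumes "0 < p"
  shows "[a + (p - a mod p) = 0] (mod p)"
proof -
  have "a + (p - a mod p) = p * (a div p) + p"
    using mult_div_mod_eq[of p a] mod_less_divisor[OF assms, of a] by linarith
  then show ?thesis
    by (simp add: cong_def)
qed

lemma prime_cong_solve:
  fixes u :: nat
  assumes "prime p" "\<not> [u = 0] (mod p)"
  obtains m where "[m * u = t] (mod p)"
proof -
  have "coprime u p"
    using assms prime_imp_coprime[of p u] by (simp add: cong_0_iff coprime_commute)
  then show ?thesis
    using cong_solve_dvd_nat[of u p t] that by (auto simp: mult.commute)
qed

lemma pattern_relD:
  assumes "pattern_rel A n rho i j" "a \<in> tuples A n" "bi \<in> A" "bj \<in> A"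
    and "a[i := bi] \<in> rho" "a[j := bj] \<in> rho" "a[i := bi, j := bj] \<in> rho"
  shows "a \<in> rho"
  using assms unfolding pattern_rel_def by blast

lemma tuples_length: "x \<in> tuples A n \<Longrightarrow> length x = n"
  by (simp add: tuples_def)

lemma tuples_nth: "x \<in> tuples A n \<Longrightarrow> i < n \<Longrightarrow> x ! i \<in> A"
  unfolding tuples_def by auto

lemma cong_sum_list_second_difference:
  fixes x y :: "nat list"
  assumes x: "x \<in> tuples {0..<p} n" and y: "y \<in> tuples {0..<p} n"
    and sums: "[sum_list x = sum_list y] (mod p)" and i: "i < n" "x ! i \<noteq> y ! i"
  obtains k where "k < n" "k \<noteq> i" "x ! k \<noteq> y ! k"
proof (rule ccontr)
  assume "\<not> thesis"
  with that have "\<forall>k<n. k \<noteq> i \<longrightarrow> x ! k = y ! k" by blast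
  then have "x = y[i := x ! i]"
    using x y i by (intro nth_equalityI) (auto simp: tuples_length nth_list_update)
  then have "sum_list x = sum_list (y[i := x ! i])"
    by (rule arg_cong)
  moreover have "sum_list (y[i := x ! i]) + y ! i = sum_list y + x ! i"
    using i y elem_le_sum_list[of i y] by (simp add: tuples_length sum_list_update)
  ultimately have "sum_list x + y ! i = sum_list y + x ! i"
    by simp
  with sums have "[x ! i = y ! i] (mod p)"
    by (metis cong_add_lcancel_nat cong_add_rcancel_nat add.commute)
  with tuples_nth[OF x i(1)] tuples_nth[OF y i(1)] i(2) show False
    by (simp add: cong_def)
qed

lemma cong_sum_list_reachable_by_transfers:
  assumes p: "0 < p" and c: "c \<in> X" "c \<in> tuples {0..<p} n"
    and closed: "\<And>x i k d e. x \<in> X \<Longrightarrow> i < n \<Longrightarrow> k < n \<Longrightarrow> i \<noteq> k \<Longrightarrow>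
        [d + e = 0] (mod p) \<Longrightarrow> shift_at p (shift_at p x i d) k e \<in> X"
  shows "w \<in> tuples {0..<p} n \<Longrightarrow> [sum_list w = sum_list c] (mod p) \<Longrightarrow> w \<in> X"
proof (induction "card {j. j < n \<and> w ! j \<noteq> c ! j}" arbitrary: w rule: less_induct)
  case less
  note w = less.prems(1)
  show ?case
  proof (cases "\<exists>i<n. w ! i \<noteq> c ! i")
    case False
    then have "w = c"
      using w c(2) by (intro nth_equalityI) (auto simp: tuples_length)
    with c(1) show ?thesis by simp
  next
    case True
    then obtain i where i: "i < n" "w ! i \<noteq> c ! i" by blast
    obtain k where k: "k < n" "k \<noteq> i" "w ! k \<noteq> c ! k"
      using cong_sum_list_second_difference[OF w c(2) less.prems(2) i] .
    have bounds: "w ! i < p" "w ! k < p" "c ! i < p"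
      using tuples_nth[OF w] tuples_nth[OF c(2)] i k by auto
    define d where "d = c ! i + (p - w ! i)"
    define e where "e = w ! i + (p - c ! i)"
    have de: "[d + e = 0] (mod p)" "[e + d = 0] (mod p)"
      using bounds by (simp_all add: d_def e_def cong_def)
    define w' where "w' = shift_at p (shift_at p w i d) k e"
    have lw: "length w = n" using w by (rule tuples_length)
    have w'_i: "w' ! i = c ! i"
      using bounds i k lw by (simp add: w'_def d_def nth_shift_at)
    have "{j. j < n \<and> w' ! j \<noteq> c ! j} \<subseteq> {j. j < n \<and> w ! j \<noteq> c ! j} - {i}"
      using w'_i k lw by (auto simp: w'_def nth_shift_at split: if_splits)
    then have fewer: "card {j. j < n \<and> w' ! j \<noteq> c ! j} < card {j. j < n \<and> w ! j \<noteq> c ! j}"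
      using i by (intro psubset_card_mono) auto
    have "[sum_list w' = sum_list w + d + e] (mod p)"
      using sum_list_shift_at_pair[of i w k p d e] i k lw unfolding w'_def by simp
    also have "[sum_list w + d + e = sum_list w] (mod p)"
      using de(1) cong_add_lcancel_0_nat by (simp add: add.assoc)
    finally have "[sum_list w' = sum_list c] (mod p)"
      using less.prems(2) cong_trans by blast
    moreover have "w' \<in> tuples {0..<p} n"
      unfolding w'_def using p w by (intro shift_at_in_tuples)
    ultimately have "w' \<in> X"
      using less.hyps[OF fewer] by blast
    then have "shift_at p (shift_at p w' i e) k d \<in> X"
      using closed i k de(2) by blast
    moreover have "shift_at p (shift_at p w' i e) k d = w"
      using bounds de(1) k(2)
      by (simp add: w'_def shift_at_pair_add shift_at_zero nth_shift_at add.commute[of e d])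
    ultimately show ?thesis by simp
  qed
qed

locale zero_sum_extension =
  fixes p n :: nat and rho :: "nat list set"
  assumes prime: "prime p" and three_le_n: "3 \<le> n"
    and rho_tuples: "rho \<subseteq> tuples {0..<p} n"
    and full: "full_pattern {0..<p} n rho"
    and zero_sum_subset: "{xs \<in> tuples {0..<p} n. sum_list xs mod p = 0} \<subseteq> rho"
begin

lemma p_pos: "0 < p"
  using prime prime_gt_0_nat by blast

lemma rho_length: "x \<in> rho \<Longrightarrow> length x = n"
  using rho_tuples tuples_length by blast

lemma rho_nth: "x \<in> rho \<Longrightarrow> i < n \<Longrightarrow> x ! i < p"
  using rho_tuples tuples_nth by fastforce

lemma zero_sum_in_rho: "x \<in> tuples {0..<p} n \<Longrightarrow> [sum_list x = 0] (mod p) \<Longrightarrow> x \<in> rho"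
  using zero_sum_subset by (auto simp: cong_def)

lemma rho_square_closed:
  assumes "a \<in> tuples {0..<p} n" "i < n" "j < n" "i \<noteq> j" "bi < p" "bj < p"
    and "a[i := bi] \<in> rho" "a[j := bj] \<in> rho" "a[i := bi, j := bj] \<in> rho"
  shows "a \<in> rho"
  using assms full pattern_relD[of "{0..<p}" n rho i j a bi bj] by (simp add: full_pattern_def)

text \<open>Restoring position i, position j, or both, gives tuples of sum 0 or x itself.\<close>

lemma double_shift_in_rho:
  assumes x: "x \<in> rho" and ij: "i < n" "j < n" "i \<noteq> j"
    and d: "[sum_list x + d = 0] (mod p)"
  shows "shift_at p (shift_at p x i d) j d \<in> rho"
proof -
  have xt: "x \<in> tuples {0..<p} n" and lx: "length x = n"
    using x rho_tuples rho_length by auto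
  have shifted: "shift_at p x l d \<in> rho" if "l < n" for l
    using that lx d p_pos xt
    by (intro zero_sum_in_rho shift_at_in_tuples)
      (auto intro: cong_trans[OF sum_list_shift_at])
  let ?a = "shift_at p (shift_at p x i d) j d"
  have "?a[i := x ! i] = shift_at p x j d" "?a[j := x ! j] = shift_at p x i d"
    "?a[i := x ! i, j := x ! j] = x"
    using ij lx by (auto intro!: nth_equalityI simp: nth_list_update nth_shift_at)
  then show ?thesis
    using rho_square_closed[OF _ ij rho_nth[OF x ij(1)] rho_nth[OF x ij(2)]] shifted ij x
      shift_at_in_tuples[OF p_pos] xt
    by simp
qed

lemma transfer_in_rho_by_sum:
  assumes x: "x \<in> rho" and ik: "i < n" "k < n" "i \<noteq> k"
    and d: "[sum_list x + d = 0] (mod p)" and de: "[d + e = 0] (mod p)"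
  shows "shift_at p (shift_at p x i d) k e \<in> rho"
proof -
  have lx: "length x = n" using x by (rule rho_length)
  have "\<exists>j::nat. j < 3 \<and> j \<noteq> i \<and> j \<noteq> k" by presburger
  then obtain j where j: "j < n" "j \<noteq> i" "j \<noteq> k"
    using three_le_n by (meson less_le_trans)
  \<comment> \<open>Shift i and j by d, then k and j by e: the two shifts at j cancel.\<close>
  define y where "y = shift_at p (shift_at p x i d) j d"
  have y: "y \<in> rho"
    unfolding y_def using x ik(1) j(1,2) d by (intro double_shift_in_rho) auto
  have "[sum_list y + e = sum_list x + d + d + e] (mod p)"
    using cong_add[OF sum_list_shift_at_pair[of i x j p d d] cong_refl[of e]] ik j lx
    unfolding y_def by simp
  also have "[sum_list x + d + d + e = 0] (mod p)"
    using cong_add[OF d de] by (simp add: add.assoc)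
  finally have "shift_at p (shift_at p y k e) j e \<in> rho"
    using y ik(2) j by (intro double_shift_in_rho) auto
  moreover have "shift_at p (shift_at p y k e) j e = shift_at p (shift_at p x i d) k e"
    using j lx de rho_nth[OF x j(1)]
    by (simp add: y_def shift_at_commute[of j k] shift_at_shift_at shift_at_zero nth_shift_at)
  ultimately show ?thesis by simp
qed

lemma transfer_multiple_in_rho:
  assumes x: "x \<in> rho" and ik: "i < n" "k < n" "i \<noteq> k"
    and d: "[sum_list x + d = 0] (mod p)" and de: "[d + e = 0] (mod p)"
  shows "shift_at p (shift_at p x i (m * d)) k (m * e) \<in> rho"
proof (induction m)
  case 0
  have "shift_at p (shift_at p x i 0) k 0 = x"
    using rho_nth[OF x] ik by (simp add: shift_at_zero)
  with x show ?case by simp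
next
  case (Suc m)
  let ?y = "shift_at p (shift_at p x i (m * d)) k (m * e)"
  have "[sum_list ?y = sum_list x + m * (d + e)] (mod p)"
    using sum_list_shift_at_pair[of i x k p "m * d" "m * e"] ik rho_length[OF x]
    by (simp add: algebra_simps)
  also have "[sum_list x + m * (d + e) = sum_list x] (mod p)"
    using cong_add[OF cong_refl cong_scalar_left[OF de, of m]] by simp
  finally have "[sum_list ?y + d = 0] (mod p)"
    using d cong_add_rcancel_nat cong_trans by blast
  then have "shift_at p (shift_at p ?y i d) k e \<in> rho"
    using transfer_in_rho_by_sum[OF Suc.IH ik _ de] by blast
  then show ?case
    using ik(3) by (simp add: shift_at_pair_add add.commute)
qed

lemma transfer_in_rho:
  assumes x: "x \<in> rho" and ik: "i < n" "k < n" "i \<noteq> k" and de: "[d + e = 0] (mod p)"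
  shows "shift_at p (shift_at p x i d) k e \<in> rho"
proof (cases "[sum_list x = 0] (mod p)")
  case True
  have "[sum_list (shift_at p (shift_at p x i d) k e) = sum_list x + (d + e)] (mod p)"
    using sum_list_shift_at_pair[of i x k p d e] ik rho_length[OF x] by (simp add: add.assoc)
  also have "[sum_list x + (d + e) = 0] (mod p)"
    using cong_add[OF True de] by simp
  finally show ?thesis
    using x rho_tuples p_pos by (intro zero_sum_in_rho shift_at_in_tuples) auto
next
  case False
  let ?s = "sum_list x" and ?d0 = "p - sum_list x mod p"
  have s: "[?s + ?d0 = 0] (mod p)"
    using p_pos by (rule cong_add_complement)
  obtain m where m: "[m * ?s = e] (mod p)"
    using prime_cong_solve[OF prime False] .
  have "[m * ?d0 + e = m * ?d0 + m * ?s] (mod p)"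
    using m by (simp add: cong_add_lcancel_nat cong_sym)
  also have "[m * ?d0 + m * ?s = 0] (mod p)"
    using cong_scalar_left[OF s, of m] by (simp add: algebra_simps)
  also have "[0 = d + e] (mod p)"
    using de by (rule cong_sym)
  finally have md: "[m * ?d0 = d] (mod p)"
    by (simp add: cong_add_rcancel_nat)
  have "shift_at p (shift_at p x i (m * ?d0)) k (m * ?s) \<in> rho"
    using transfer_multiple_in_rho[OF x ik s] s by (simp add: add.commute)
  then show ?thesis
    using shift_at_cong[OF md] shift_at_cong[OF m] by simp
qed

lemma cong_sum_list_in_rho:
  "x \<in> rho \<Longrightarrow> w \<in> tuples {0..<p} n \<Longrightarrow> [sum_list w = sum_list x] (mod p) \<Longrightarrow> w \<in> rho"
  using cong_sum_list_reachable_by_transfers[OF p_pos _ _ transfer_in_rho] rho_tuples by blast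

lemma sum_add_in_rho:
  assumes x: "x \<in> rho" and y: "y \<in> rho" and w: "w \<in> tuples {0..<p} n"
    and sum_w: "[sum_list w = sum_list x + sum_list y] (mod p)"
  shows "w \<in> rho"
proof -
  let ?dx = "p - sum_list x mod p" and ?dy = "p - sum_list y mod p"
  have lw: "length w = n" and n01: "0 < n" "1 < n"
    using w three_le_n by (auto simp: tuples_length)
  have sx: "[sum_list x + ?dx = 0] (mod p)" and sy: "[sum_list y + ?dy = 0] (mod p)"
    using cong_add_complement[OF p_pos] by blast+
  have "[sum_list (shift_at p w 0 ?dy) = sum_list x + sum_list y + ?dy] (mod p)"
    using cong_trans[OF sum_list_shift_at cong_add[OF sum_w cong_refl[of ?dy]]] lw n01 by simp
  also have "[sum_list x + sum_list y + ?dy = sum_list x] (mod p)"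
    using cong_add[OF cong_refl[of "sum_list x"] sy] by (simp add: add.assoc)
  finally have r0: "shift_at p w 0 ?dy \<in> rho"
    using cong_sum_list_in_rho[OF x] shift_at_in_tuples[OF p_pos w] by blast
  have "[sum_list (shift_at p w 1 ?dx) = sum_list x + sum_list y + ?dx] (mod p)"
    using cong_trans[OF sum_list_shift_at cong_add[OF sum_w cong_refl[of ?dx]]] lw n01 by simp
  also have "sum_list x + sum_list y + ?dx = sum_list y + (sum_list x + ?dx)"
    by (simp add: ac_simps)
  also have "[sum_list y + (sum_list x + ?dx) = sum_list y] (mod p)"
    using cong_add[OF cong_refl[of "sum_list y"] sx] by simp
  finally have r1: "shift_at p w 1 ?dx \<in> rho"
    using cong_sum_list_in_rho[OF y] shift_at_in_tuples[OF p_pos w] by blast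
  have "[sum_list (shift_at p (shift_at p w 0 ?dy) 1 ?dx) = sum_list x + sum_list y + ?dy + ?dx] (mod p)"
    using cong_trans[OF sum_list_shift_at_pair cong_add[OF cong_add[OF sum_w cong_refl[of ?dy]] cong_refl[of ?dx]]]
      lw n01 by simp
  also have "sum_list x + sum_list y + ?dy + ?dx = (sum_list x + ?dx) + (sum_list y + ?dy)"
    by (simp add: ac_simps)
  also have "[(sum_list x + ?dx) + (sum_list y + ?dy) = 0] (mod p)"
    using cong_add[OF sx sy] by simp
  finally have r01: "shift_at p (shift_at p w 0 ?dy) 1 ?dx \<in> rho"
    using zero_sum_in_rho shift_at_in_tuples[OF p_pos] w by blast
  show ?thesis
    by (rule rho_square_closed[OF w n01, of "(w ! 0 + ?dy) mod p" "(w ! 1 + ?dx) mod p"])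
      (use r0 r1 r01 p_pos lw n01 in \<open>simp_all add: shift_at_def\<close>)
qed

lemma sum_multiple_in_rho:
  assumes x: "x \<in> rho"
  shows "w \<in> tuples {0..<p} n \<Longrightarrow> [sum_list w = m * sum_list x] (mod p) \<Longrightarrow> w \<in> rho"
proof (induction m arbitrary: w)
  case 0
  then show ?case by (simp add: zero_sum_in_rho)
next
  case (Suc m)
  let ?dx = "p - sum_list x mod p"
  have n0: "0 < length w"
    using Suc.prems(1) three_le_n by (simp add: tuples_length)
  have "[sum_list (shift_at p w 0 ?dx) = Suc m * sum_list x + ?dx] (mod p)"
    using cong_trans[OF sum_list_shift_at[OF n0] cong_add[OF Suc.prems(2) cong_refl[of ?dx]]] .
  also have "Suc m * sum_list x + ?dx = m * sum_list x + (sum_list x + ?dx)"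
    by simp
  also have "[m * sum_list x + (sum_list x + ?dx) = m * sum_list x] (mod p)"
    using cong_add[OF cong_refl cong_add_complement[OF p_pos]] by simp
  finally have shifted_sum: "[sum_list (shift_at p w 0 ?dx) = m * sum_list x] (mod p)" .
  then have "shift_at p w 0 ?dx \<in> rho"
    using Suc.IH shift_at_in_tuples[OF p_pos Suc.prems(1)] by blast
  moreover have "[sum_list w = sum_list x + sum_list (shift_at p w 0 ?dx)] (mod p)"
  proof -
    have "[sum_list w = sum_list x + m * sum_list x] (mod p)"
      using Suc.prems(2) by simp
    also have "[sum_list x + m * sum_list x = sum_list x + sum_list (shift_at p w 0 ?dx)] (mod p)"
      by (rule cong_add[OF cong_refl cong_sym[OF shifted_sum]])
    finally show ?thesis .
  qed
  ultimately show ?case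
    using sum_add_in_rho[OF x _ Suc.prems(1)] by blast
qed

end

theorem mainTheorem17:
  fixes p n :: nat and rho :: "nat list set"
  assumes "prime p" and "n \<ge> 3"
    and "rho \<subseteq> tuples {0..<p} n"
    and "full_pattern {0..<p} n rho"
    and "{xs \<in> tuples {0..<p} n. sum_list xs mod p = 0} \<subset> rho"
  shows "rho = tuples {0..<p} n"
proof -
  interpret zero_sum_extension p n rho
    using assms by unfold_locales auto
  obtain c where c: "c \<in> rho" "\<not> [sum_list c = 0] (mod p)"
    using assms(3,5) by (auto simp: cong_def)
  have "w \<in> rho" if w: "w \<in> tuples {0..<p} n" for w
  proof -
    obtain m where "[m * sum_list c = sum_list w] (mod p)"
      using prime_cong_solve[OF assms(1) c(2)] .
    then show ?thesis
      using sum_multiple_in_rho[OF c(1) w] cong_sym by blast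
  qed
  with assms(3) show ?thesis by blast
qed

end
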